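(* For every abelian category $\mathcal{A}$, the category $\widetilde{Q}\mathcal{A}$ is filtered.
   Context: For an abelian category $\mathcal{A}$, the category $\widetilde{Q}\mathcal{A}$ has the same objects as $\mathcal{A}$. A morphism $M\to M'$ is represented by a span $M\overset{p}{\twoheadleftarrow}N\overset{\iota}{\hookrightarrow}M'$ with $p$ an epimorphism and $\iota$ a monomorphism; two spans $(p_f,\iota_f)$ via $N$ and $(p_g,\iota_g)$ via $N'$ represent the same morphism if they are related by the equivalence relation generated by: $f\sim g$ whenever there is a monomorphism $j:N\hookrightarrow N'$ with $p_g\circ j=p_f$ and $\iota_g\circ j=\iota_f$ (in particular isomorphic spans are identified). Composition is induced by composing spans via fiber products (as in Quillen's Q-construction). *)

theory Defs
  imports Main
begin

text \<open>Categories given by explicit carriers (objects of type 'o, arrows of type 'm).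
  Comp g f is the composite "g after f".\<close>

record ('o,'m) cat =
  Obj  :: "'o set"
  Arr  :: "'m set"
  Dom  :: "'m \<Rightarrow> 'o"
  Cod  :: "'m \<Rightarrow> 'o"
  Id   :: "'o \<Rightarrow> 'm"
  Comp :: "'m \<Rightarrow> 'm \<Rightarrow> 'm"

definition category :: "('o,'m) cat \<Rightarrow> bool" where
  "category C \<longleftrightarrow>
     (\<forall>f\<in>Arr C. Dom C f \<in> Obj C \<and> Cod C f \<in> Obj C) \<and>
     (\<forall>A\<in>Obj C. Id C A \<in> Arr C \<and> Dom C (Id C A) = A \<and> Cod C (Id C A) = A) \<and>
     (\<forall>f\<in>Arr C. \<forall>g\<in>Arr C. Cod C f = Dom C g \<longrightarrow>
         Comp C g f \<in> Arr C \<and> Dom C (Comp C g f) = Dom C f \<and> Cod C (Comp C g f) = Cod C g) \<and>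
     (\<forall>f\<in>Arr C. \<forall>g\<in>Arr C. \<forall>h\<in>Arr C. Cod C f = Dom C g \<longrightarrow> Cod C g = Dom C h \<longrightarrow>
         Comp C h (Comp C g f) = Comp C (Comp C h g) f) \<and>
     (\<forall>f\<in>Arr C. Comp C (Id C (Cod C f)) f = f \<and> Comp C f (Id C (Dom C f)) = f)"

definition hom :: "('o,'m) cat \<Rightarrow> 'o \<Rightarrow> 'o \<Rightarrow> 'm set" where
  "hom C A B = {f \<in> Arr C. Dom C f = A \<and> Cod C f = B}"

definition mono :: "('o,'m) cat \<Rightarrow> 'm \<Rightarrow> bool" where
  "mono C m \<longleftrightarrow> m \<in> Arr C \<and>
     (\<forall>g\<in>Arr C. \<forall>h\<in>Arr C. Cod C g = Dom C m \<longrightarrow> Cod C h = Dom C m \<longrightarrow> Dom C g = Dom C h \<longrightarrow>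
        Comp C m g = Comp C m h \<longrightarrow> g = h)"

definition epi :: "('o,'m) cat \<Rightarrow> 'm \<Rightarrow> bool" where
  "epi C e \<longleftrightarrow> e \<in> Arr C \<and>
     (\<forall>g\<in>Arr C. \<forall>h\<in>Arr C. Dom C g = Cod C e \<longrightarrow> Dom C h = Cod C e \<longrightarrow> Cod C g = Cod C h \<longrightarrow>
        Comp C g e = Comp C h e \<longrightarrow> g = h)"

definition zero_obj :: "('o,'m) cat \<Rightarrow> 'o \<Rightarrow> bool" where
  "zero_obj C z \<longleftrightarrow> z \<in> Obj C \<and>
     (\<forall>A\<in>Obj C. (\<exists>!f. f \<in> hom C A z) \<and> (\<exists>!f. f \<in> hom C z A))"

definition zero_arr :: "('o,'m) cat \<Rightarrow> 'm \<Rightarrow> bool" where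
  "zero_arr C f \<longleftrightarrow> f \<in> Arr C \<and>
     (\<exists>z. zero_obj C z \<and> (\<exists>g h. g \<in> hom C (Dom C f) z \<and> h \<in> hom C z (Cod C f) \<and> f = Comp C h g))"

definition is_product :: "('o,'m) cat \<Rightarrow> 'o \<Rightarrow> 'o \<Rightarrow> 'o \<Rightarrow> 'm \<Rightarrow> 'm \<Rightarrow> bool" where
  "is_product C A B P p1 p2 \<longleftrightarrow> P \<in> Obj C \<and> p1 \<in> hom C P A \<and> p2 \<in> hom C P B \<and>
     (\<forall>X\<in>Obj C. \<forall>f1\<in>hom C X A. \<forall>f2\<in>hom C X B.
        \<exists>!u. u \<in> hom C X P \<and> Comp C p1 u = f1 \<and> Comp C p2 u = f2)"

definition is_coproduct :: "('o,'m) cat \<Rightarrow> 'o \<Rightarrow> 'o \<Rightarrow> 'o \<Rightarrow> 'm \<Rightarrow> 'm \<Rightarrow> bool" where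
  "is_coproduct C A B S i1 i2 \<longleftrightarrow> S \<in> Obj C \<and> i1 \<in> hom C A S \<and> i2 \<in> hom C B S \<and>
     (\<forall>X\<in>Obj C. \<forall>f1\<in>hom C A X. \<forall>f2\<in>hom C B X.
        \<exists>!u. u \<in> hom C S X \<and> Comp C u i1 = f1 \<and> Comp C u i2 = f2)"

definition is_kernel :: "('o,'m) cat \<Rightarrow> 'm \<Rightarrow> 'm \<Rightarrow> bool" where
  "is_kernel C f k \<longleftrightarrow> f \<in> Arr C \<and> k \<in> Arr C \<and> Cod C k = Dom C f \<and> zero_arr C (Comp C f k) \<and>
     (\<forall>k'\<in>Arr C. Cod C k' = Dom C f \<longrightarrow> zero_arr C (Comp C f k') \<longrightarrow>
        (\<exists>!u. u \<in> hom C (Dom C k') (Dom C k) \<and> Comp C k u = k'))"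

definition is_cokernel :: "('o,'m) cat \<Rightarrow> 'm \<Rightarrow> 'm \<Rightarrow> bool" where
  "is_cokernel C f c \<longleftrightarrow> f \<in> Arr C \<and> c \<in> Arr C \<and> Dom C c = Cod C f \<and> zero_arr C (Comp C c f) \<and>
     (\<forall>c'\<in>Arr C. Dom C c' = Cod C f \<longrightarrow> zero_arr C (Comp C c' f) \<longrightarrow>
        (\<exists>!u. u \<in> hom C (Cod C c) (Cod C c') \<and> Comp C u c = c'))"

definition abelian :: "('o,'m) cat \<Rightarrow> bool" where
  "abelian C \<longleftrightarrow> category C \<and>
     (\<exists>z. zero_obj C z) \<and>
     (\<forall>A\<in>Obj C. \<forall>B\<in>Obj C. \<exists>P p1 p2. is_product C A B P p1 p2) \<and>
     (\<forall>A\<in>Obj C. \<forall>B\<in>Obj C. \<exists>S i1 i2. is_coproduct C A B S i1 i2) \<and>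
     (\<forall>f\<in>Arr C. \<exists>k. is_kernel C f k) \<and>
     (\<forall>f\<in>Arr C. \<exists>c. is_cokernel C f c) \<and>
     (\<forall>m. mono C m \<longrightarrow> (\<exists>f. is_kernel C f m)) \<and>
     (\<forall>e. epi C e \<longrightarrow> (\<exists>f. is_cokernel C f e))"

text \<open>A span (N, p, i) represents M <<-p- N >->i M'.\<close>
type_synonym ('o,'m) span = "'o \<times> 'm \<times> 'm"

definition valid_span :: "('o,'m) cat \<Rightarrow> 'o \<Rightarrow> 'o \<Rightarrow> ('o,'m) span \<Rightarrow> bool" where
  "valid_span C M M' s \<longleftrightarrow> (case s of (N, p, i) \<Rightarrow>
     N \<in> Obj C \<and> p \<in> hom C N M \<and> epi C p \<and> i \<in> hom C N M' \<and> mono C i)"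

definition span_step :: "('o,'m) cat \<Rightarrow> ('o,'m) span \<Rightarrow> ('o,'m) span \<Rightarrow> bool" where
  "span_step C s t \<longleftrightarrow> (case s of (N, pf, jf) \<Rightarrow> case t of (N', pg, jg) \<Rightarrow>
     (\<exists>j\<in>hom C N N'. mono C j \<and> Comp C pg j = pf \<and> Comp C jg j = jf))"

definition span_equiv :: "('o,'m) cat \<Rightarrow> 'o \<Rightarrow> 'o \<Rightarrow> ('o,'m) span \<Rightarrow> ('o,'m) span \<Rightarrow> bool" where
  "span_equiv C M M' = (\<lambda>s t. valid_span C M M' s \<and> valid_span C M M' t \<and>
                                (span_step C s t \<or> span_step C t s))\<^sup>*\<^sup>*"

definition span_class :: "('o,'m) cat \<Rightarrow> 'o \<Rightarrow> 'o \<Rightarrow> ('o,'m) span \<Rightarrow> ('o,'m) span set" where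
  "span_class C M M' s = {t. valid_span C M M' t \<and> span_equiv C M M' s t}"

text \<open>Morphisms M -> M' of Q~A: equivalence classes of valid spans.\<close>
definition Qhom :: "('o,'m) cat \<Rightarrow> 'o \<Rightarrow> 'o \<Rightarrow> ('o,'m) span set set" where
  "Qhom C M M' = {span_class C M M' s | s. valid_span C M M' s}"

definition is_pullback :: "('o,'m) cat \<Rightarrow> 'm \<Rightarrow> 'm \<Rightarrow> 'o \<Rightarrow> 'm \<Rightarrow> 'm \<Rightarrow> bool" where
  "is_pullback C f g P a b \<longleftrightarrow> P \<in> Obj C \<and> a \<in> hom C P (Dom C f) \<and> b \<in> hom C P (Dom C g) \<and>
     Comp C f a = Comp C g b \<and>
     (\<forall>X\<in>Obj C. \<forall>a'\<in>hom C X (Dom C f). \<forall>b'\<in>hom C X (Dom C g). Comp C f a' = Comp C g b' \<longrightarrow>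
        (\<exists>!u. u \<in> hom C X P \<and> Comp C a u = a' \<and> Comp C b u = b'))"

definition span_comps :: "('o,'m) cat \<Rightarrow> ('o,'m) span \<Rightarrow> ('o,'m) span \<Rightarrow> ('o,'m) span set" where
  "span_comps C s t = (case s of (N, p, i) \<Rightarrow> case t of (K, q, k) \<Rightarrow>
     {(P, Comp C p a, Comp C k b) | P a b. is_pullback C i q P a b})"

text \<open>Composition in Q~A of G : M' -> M'' after F : M -> M'.\<close>
definition Qcomp :: "('o,'m) cat \<Rightarrow> 'o \<Rightarrow> 'o \<Rightarrow> 'o \<Rightarrow> ('o,'m) span set \<Rightarrow> ('o,'m) span set \<Rightarrow> ('o,'m) span set" where
  "Qcomp C M M' M'' G F =
     {u. \<exists>f\<in>F. \<exists>g\<in>G. \<exists>s\<in>span_comps C f g. u \<in> span_class C M M'' s}"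

definition Q_filtered :: "('o,'m) cat \<Rightarrow> bool" where
  "Q_filtered C \<longleftrightarrow> Obj C \<noteq> {} \<and>
     (\<forall>X\<in>Obj C. \<forall>Y\<in>Obj C. \<exists>Z\<in>Obj C. Qhom C X Z \<noteq> {} \<and> Qhom C Y Z \<noteq> {}) \<and>
     (\<forall>X\<in>Obj C. \<forall>Y\<in>Obj C. \<forall>F\<in>Qhom C X Y. \<forall>G\<in>Qhom C X Y.
        \<exists>Z\<in>Obj C. \<exists>H\<in>Qhom C Y Z. Qcomp C X Y Z H F = Qcomp C X Y Z H G)"

end

theory Submission
  imports Defs
begin

text \<open>Given objects X and Y, let Z = Y \<times> X with its split-mono injections e1 : Y \<rightarrow> Z and
  e2 : X \<rightarrow> Z. Then H = [Y, Id, e1] : Y \<rightarrow> Z absorbs every morphism F = [N, p, i] : X \<rightarrow> Y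
  of Q~A: the composite H \<circ> F is represented by (N, p, e1 \<cdot> i), and with M = N \<times> X and
  m = i \<times> Id : M \<rightarrow> Y \<times> X this span is linked to (X, Id, e2) through the spans
  (M, p \<cdot> r1, m) and (M, r2, m), which share the subspan (N, p, m \<cdot> (Id, p)).
  Hence H \<circ> F = [X, Id, e2] for all F, which gives both filteredness conditions at once.
  The abelian structure enters through composition: pullbacks along monos exist and
  pull epis back to epis, so composition of spans is well defined on equivalence classes.\<close>

locale category_context =
  fixes C :: "('o,'m) cat"
  assumes category: "category C"
begin

abbreviation comp (infixr "\<cdot>" 55) where "g \<cdot> f \<equiv> Comp C g f"

lemma dom_in_Obj [intro, simp]: "f \<in> Arr C \<Longrightarrow> Dom C f \<in> Obj C"
  and cod_in_Obj [intro, simp]: "f \<in> Arr C \<Longrightarrow> Cod C f \<in> Obj C"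
  and Id_in_Arr [simp]: "A \<in> Obj C \<Longrightarrow> Id C A \<in> Arr C"
  and Dom_Id [simp]: "A \<in> Obj C \<Longrightarrow> Dom C (Id C A) = A"
  and Cod_Id [simp]: "A \<in> Obj C \<Longrightarrow> Cod C (Id C A) = A"
  and comp_in_Arr [simp]: "f \<in> Arr C \<Longrightarrow> g \<in> Arr C \<Longrightarrow> Cod C f = Dom C g \<Longrightarrow> g \<cdot> f \<in> Arr C"
  and Dom_comp [simp]: "f \<in> Arr C \<Longrightarrow> g \<in> Arr C \<Longrightarrow> Cod C f = Dom C g \<Longrightarrow> Dom C (g \<cdot> f) = Dom C f"
  and Cod_comp [simp]: "f \<in> Arr C \<Longrightarrow> g \<in> Arr C \<Longrightarrow> Cod C f = Dom C g \<Longrightarrow> Cod C (g \<cdot> f) = Cod C g"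
  and comp_Id_left [simp]: "f \<in> Arr C \<Longrightarrow> Cod C f = B \<Longrightarrow> Id C B \<cdot> f = f"
  and comp_Id_right [simp]: "f \<in> Arr C \<Longrightarrow> Dom C f = A \<Longrightarrow> f \<cdot> Id C A = f"
  using category by (auto simp: category_def)

lemma in_hom_iff [simp]: "f \<in> hom C A B \<longleftrightarrow> f \<in> Arr C \<and> Dom C f = A \<and> Cod C f = B"
  by (simp add: hom_def)

lemma comp_assoc:
  "f \<in> hom C A B \<Longrightarrow> g \<in> hom C B D \<Longrightarrow> h \<in> hom C D E \<Longrightarrow> h \<cdot> (g \<cdot> f) = (h \<cdot> g) \<cdot> f"
  using category unfolding category_def by auto

lemma mono_cancel:
  "mono C m \<Longrightarrow> m \<cdot> g = m \<cdot> h \<Longrightarrow> g \<in> hom C X (Dom C m) \<Longrightarrow> h \<in> hom C X (Dom C m) \<Longrightarrow> g = h"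
  unfolding mono_def by auto

lemma epi_cancel:
  "epi C e \<Longrightarrow> g \<cdot> e = h \<cdot> e \<Longrightarrow> g \<in> hom C (Cod C e) Y \<Longrightarrow> h \<in> hom C (Cod C e) Y \<Longrightarrow> g = h"
  unfolding epi_def by auto

lemma monoI:
  assumes "m \<in> Arr C"
    and "\<And>X g h. g \<in> hom C X (Dom C m) \<Longrightarrow> h \<in> hom C X (Dom C m) \<Longrightarrow> m \<cdot> g = m \<cdot> h \<Longrightarrow> g = h"
  shows "mono C m"
  using assms unfolding mono_def by auto

lemma epiI:
  assumes "e \<in> Arr C"
    and "\<And>Y g h. g \<in> hom C (Cod C e) Y \<Longrightarrow> h \<in> hom C (Cod C e) Y \<Longrightarrow> g \<cdot> e = h \<cdot> e \<Longrightarrow> g = h"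
  shows "epi C e"
  using assms unfolding epi_def by auto

lemma mono_in_Arr: "mono C m \<Longrightarrow> m \<in> Arr C"
  and epi_in_Arr: "epi C e \<Longrightarrow> e \<in> Arr C"
  by (simp_all add: mono_def epi_def)

lemma mono_comp:
  assumes m: "mono C m" and n: "mono C n" and "Cod C m = Dom C n"
  shows "mono C (n \<cdot> m)"
proof (rule monoI)
  have arr: "m \<in> Arr C" "n \<in> Arr C" using m n by (simp_all add: mono_in_Arr)
  then show "n \<cdot> m \<in> Arr C" using assms by simp
  fix X g h assume g: "g \<in> hom C X (Dom C (n \<cdot> m))" "h \<in> hom C X (Dom C (n \<cdot> m))"
    and eq: "(n \<cdot> m) \<cdot> g = (n \<cdot> m) \<cdot> h"
  have "n \<cdot> (m \<cdot> g) = n \<cdot> (m \<cdot> h)"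
    using eq g arr assms comp_assoc[of g X "Dom C m" m "Dom C n" n] comp_assoc[of h X "Dom C m" m "Dom C n" n]
    by simp
  then have "m \<cdot> g = m \<cdot> h" by (rule mono_cancel[OF n]) (use g arr assms in simp_all)
  then show "g = h" by (rule mono_cancel[OF m]) (use g arr assms in simp_all)
qed

lemma epi_comp:
  assumes e: "epi C e" and d: "epi C d" and "Cod C e = Dom C d"
  shows "epi C (d \<cdot> e)"
proof (rule epiI)
  have arr: "e \<in> Arr C" "d \<in> Arr C" using e d by (simp_all add: epi_in_Arr)
  then show "d \<cdot> e \<in> Arr C" using assms by simp
  fix Y g h assume g: "g \<in> hom C (Cod C (d \<cdot> e)) Y" "h \<in> hom C (Cod C (d \<cdot> e)) Y"
    and eq: "g \<cdot> (d \<cdot> e) = h \<cdot> (d \<cdot> e)"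
  have "(g \<cdot> d) \<cdot> e = (h \<cdot> d) \<cdot> e"
    using eq g arr assms comp_assoc[of e "Dom C e" "Dom C d" d "Cod C d" g] comp_assoc[of e "Dom C e" "Dom C d" d "Cod C d" h]
    by simp
  then have "g \<cdot> d = h \<cdot> d" by (rule epi_cancel[OF e]) (use g arr assms in simp_all)
  then show "g = h" by (rule epi_cancel[OF d]) (use g arr assms in simp_all)
qed

lemma mono_if_mono_comp:
  assumes nm: "mono C (n \<cdot> m)" and m: "m \<in> hom C A B" and n: "n \<in> hom C B D"
  shows "mono C m"
proof (rule monoI)
  show "m \<in> Arr C" using m by simp
  fix X g h assume g: "g \<in> hom C X (Dom C m)" "h \<in> hom C X (Dom C m)" and eq: "m \<cdot> g = m \<cdot> h"
  have "(n \<cdot> m) \<cdot> g = n \<cdot> (m \<cdot> g)" using comp_assoc[of g X A m B n D] g m n by simp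
  also have "\<dots> = (n \<cdot> m) \<cdot> h" using comp_assoc[of h X A m B n D] g m n eq by simp
  finally show "g = h" by (rule mono_cancel[OF nm]) (use g m n in simp_all)
qed

lemma section_is_mono:
  assumes s: "s \<in> hom C A B" and r: "r \<in> hom C B A" and rs: "r \<cdot> s = Id C A"
  shows "mono C s"
proof (rule monoI)
  show "s \<in> Arr C" using s by simp
  fix X g h assume g: "g \<in> hom C X (Dom C s)" "h \<in> hom C X (Dom C s)" and eq: "s \<cdot> g = s \<cdot> h"
  have "g = (r \<cdot> s) \<cdot> g" using rs g s by simp
  also have "\<dots> = r \<cdot> (s \<cdot> g)" using comp_assoc[of g X A s B r A] g s r by simp
  also have "\<dots> = (r \<cdot> s) \<cdot> h" using comp_assoc[of h X A s B r A] g s r eq by simp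
  also have "\<dots> = h" using rs g s by simp
  finally show "g = h" .
qed

lemma retraction_is_epi:
  assumes s: "s \<in> hom C A B" and r: "r \<in> hom C B A" and rs: "r \<cdot> s = Id C A"
  shows "epi C r"
proof (rule epiI)
  show "r \<in> Arr C" using r by simp
  fix Y g h assume g: "g \<in> hom C (Cod C r) Y" "h \<in> hom C (Cod C r) Y" and eq: "g \<cdot> r = h \<cdot> r"
  have "g = g \<cdot> (r \<cdot> s)" using rs g r by simp
  also have "\<dots> = (g \<cdot> r) \<cdot> s" using comp_assoc[of s A B r A g Y] g s r by simp
  also have "\<dots> = h \<cdot> (r \<cdot> s)" using comp_assoc[of s A B r A h Y] g s r eq by simp
  also have "\<dots> = h" using rs g r by simp
  finally show "g = h" .
qed

lemma Id_mono: "A \<in> Obj C \<Longrightarrow> mono C (Id C A)"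
  and Id_epi: "A \<in> Obj C \<Longrightarrow> epi C (Id C A)"
  using section_is_mono[of "Id C A" A A "Id C A"] retraction_is_epi[of "Id C A" A A "Id C A"] by simp_all

lemma zero_arr_comp_left:
  assumes f: "zero_arr C f" and g: "g \<in> Arr C" "Cod C f = Dom C g"
  shows "zero_arr C (g \<cdot> f)"
proof -
  obtain z a b where z: "zero_obj C z" and a: "a \<in> hom C (Dom C f) z" and b: "b \<in> hom C z (Cod C f)"
    and f_eq: "f = b \<cdot> a"
    using f unfolding zero_arr_def by blast
  have f_arr: "f \<in> Arr C" using f unfolding zero_arr_def by blast
  have "g \<cdot> (b \<cdot> a) = (g \<cdot> b) \<cdot> a" using comp_assoc[OF a b, of g "Cod C g"] g by simp
  then have "g \<cdot> f = (g \<cdot> b) \<cdot> a" by (simp only: f_eq)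
  moreover have "g \<cdot> b \<in> hom C z (Cod C (g \<cdot> f))" "a \<in> hom C (Dom C (g \<cdot> f)) z"
    using a b g f_arr by simp_all
  moreover have "g \<cdot> f \<in> Arr C" using f_arr g by simp
  ultimately show ?thesis using z unfolding zero_arr_def by blast
qed

lemma zero_arr_comp_right:
  assumes f: "zero_arr C f" and h: "h \<in> Arr C" "Cod C h = Dom C f"
  shows "zero_arr C (f \<cdot> h)"
proof -
  obtain z a b where z: "zero_obj C z" and a: "a \<in> hom C (Dom C f) z" and b: "b \<in> hom C z (Cod C f)"
    and f_eq: "f = b \<cdot> a"
    using f unfolding zero_arr_def by blast
  have f_arr: "f \<in> Arr C" using f unfolding zero_arr_def by blast
  have "b \<cdot> (a \<cdot> h) = (b \<cdot> a) \<cdot> h" using comp_assoc[of h "Dom C h" _ a z b "Cod C f"] a b h by simp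
  then have "f \<cdot> h = b \<cdot> (a \<cdot> h)" by (simp only: f_eq)
  moreover have "b \<in> hom C z (Cod C (f \<cdot> h))" "a \<cdot> h \<in> hom C (Dom C (f \<cdot> h)) z"
    using a b h f_arr by simp_all
  moreover have "f \<cdot> h \<in> Arr C" using f_arr h by simp
  ultimately show ?thesis using z unfolding zero_arr_def by blast
qed

lemma zero_obj_hom_unique:
  assumes z: "zero_obj C z"
  shows zero_obj_to_unique: "f \<in> hom C A z \<Longrightarrow> g \<in> hom C A z \<Longrightarrow> f = g"
    and zero_obj_from_unique: "f \<in> hom C z A \<Longrightarrow> g \<in> hom C z A \<Longrightarrow> f = g"
proof -
  assume f: "f \<in> hom C A z" and g: "g \<in> hom C A z"
  then have "A \<in> Obj C" by auto
  then have "\<exists>!h. h \<in> hom C A z" using z unfolding zero_obj_def by blast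
  with f g show "f = g" by blast
next
  assume f: "f \<in> hom C z A" and g: "g \<in> hom C z A"
  then have "A \<in> Obj C" by auto
  then have "\<exists>!h. h \<in> hom C z A" using z unfolding zero_obj_def by blast
  with f g show "f = g" by blast
qed

lemma zero_arr_unique:
  assumes f: "zero_arr C f" and g: "zero_arr C g" and "Dom C f = Dom C g" "Cod C f = Cod C g"
  shows "f = g"
proof -
  obtain z a b where z: "zero_obj C z" and a: "a \<in> hom C (Dom C f) z" and b: "b \<in> hom C z (Cod C f)"
    and f_eq: "f = b \<cdot> a"
    using f unfolding zero_arr_def by blast
  obtain z' a' b' where z': "zero_obj C z'" and a': "a' \<in> hom C (Dom C g) z'" and b': "b' \<in> hom C z' (Cod C g)"
    and g_eq: "g = b' \<cdot> a'"
    using g unfolding zero_arr_def by blast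
  have "z \<in> Obj C" using z unfolding zero_obj_def by blast
  then have "\<exists>!w. w \<in> hom C z' z" using z' unfolding zero_obj_def by blast
  then obtain w where w: "w \<in> hom C z' z" by blast
  have wa: "w \<cdot> a' = a" using zero_obj_to_unique[OF z, of "w \<cdot> a'" "Dom C f" a] w a a' assms by simp
  have bw: "b \<cdot> w = b'" using zero_obj_from_unique[OF z', of "b \<cdot> w" "Cod C f" b'] w b b' assms by simp
  have "b \<cdot> (w \<cdot> a') = (b \<cdot> w) \<cdot> a'" using comp_assoc[of a' "Dom C f" z' w z b "Cod C f"] a' w b assms by simp
  then show ?thesis by (simp only: f_eq g_eq wa bw)
qed

lemma zero_arr_exists:
  assumes z: "zero_obj C z" and "A \<in> Obj C" "B \<in> Obj C"
  shows "\<exists>f \<in> hom C A B. zero_arr C f"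
proof -
  have "(\<exists>!a. a \<in> hom C A z) \<and> (\<exists>!b. b \<in> hom C z B)"
    using assms unfolding zero_obj_def by blast
  then obtain a b where a: "a \<in> hom C A z" and b: "b \<in> hom C z B" by blast
  then have "b \<cdot> a \<in> Arr C" "a \<in> hom C (Dom C (b \<cdot> a)) z" "b \<in> hom C z (Cod C (b \<cdot> a))"
    by simp_all
  then have "zero_arr C (b \<cdot> a)" using z unfolding zero_arr_def by blast
  then show ?thesis using a b by (intro bexI[of _ "b \<cdot> a"]) simp_all
qed

section \<open>Products and pullbacks\<close>

lemma product_universal:
  assumes "is_product C A B P p1 p2" "f \<in> hom C X A" "g \<in> hom C X B"
  shows "\<exists>!u. u \<in> hom C X P \<and> p1 \<cdot> u = f \<and> p2 \<cdot> u = g"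
proof -
  have "\<forall>X \<in> Obj C. \<forall>f \<in> hom C X A. \<forall>g \<in> hom C X B. \<exists>!u. u \<in> hom C X P \<and> p1 \<cdot> u = f \<and> p2 \<cdot> u = g"
    using assms(1) unfolding is_product_def by (elim conjE)
  moreover have "X \<in> Obj C" using assms(2) by auto
  ultimately show ?thesis using assms(2,3) by blast
qed

lemma product_pairing:
  assumes "is_product C A B P p1 p2" "f \<in> hom C X A" "g \<in> hom C X B"
  obtains u where "u \<in> hom C X P" "p1 \<cdot> u = f" "p2 \<cdot> u = g"
  using product_universal[OF assms] by blast

lemma product_arrow_eqI:
  assumes P: "is_product C A B P p1 p2" and u: "u \<in> hom C X P" and v: "v \<in> hom C X P"
    and "p1 \<cdot> u = p1 \<cdot> v" "p2 \<cdot> u = p2 \<cdot> v"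
  shows "u = v"
proof -
  have "p1 \<in> hom C P A" "p2 \<in> hom C P B" using P unfolding is_product_def by auto
  then show ?thesis using product_universal[OF P, of "p1 \<cdot> u" X "p2 \<cdot> u"] assms by auto
qed

lemma mono_product_map:
  assumes P: "is_product C A B P p1 p2" and Q: "is_product C A' B' Q q1 q2"
    and f: "mono C f" "f \<in> hom C A A'" and g: "mono C g" "g \<in> hom C B B'"
    and m: "m \<in> hom C P Q" "q1 \<cdot> m = f \<cdot> p1" "q2 \<cdot> m = g \<cdot> p2"
  shows "mono C m"
proof (rule monoI)
  have p: "p1 \<in> hom C P A" "p2 \<in> hom C P B" and q: "q1 \<in> hom C Q A'" "q2 \<in> hom C Q B'"
    using P Q unfolding is_product_def by auto
  show "m \<in> Arr C" using m by simp
  fix X u v assume u: "u \<in> hom C X (Dom C m)" and v: "v \<in> hom C X (Dom C m)" and eq: "m \<cdot> u = m \<cdot> v"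
  have u': "u \<in> hom C X P" and v': "v \<in> hom C X P" using u v m by simp_all
  have "f \<cdot> (p1 \<cdot> w) = q1 \<cdot> (m \<cdot> w)" "g \<cdot> (p2 \<cdot> w) = q2 \<cdot> (m \<cdot> w)" if "w \<in> hom C X P" for w
    using comp_assoc[OF that p(1) f(2)] comp_assoc[OF that m(1) q(1)]
      comp_assoc[OF that p(2) g(2)] comp_assoc[OF that m(1) q(2)] m by simp_all
  then have fp: "f \<cdot> (p1 \<cdot> u) = f \<cdot> (p1 \<cdot> v)" and gp: "g \<cdot> (p2 \<cdot> u) = g \<cdot> (p2 \<cdot> v)"
    using u' v' eq by simp_all
  have "p1 \<cdot> u = p1 \<cdot> v" using mono_cancel[OF f(1) fp] u' v' p f by simp
  moreover have "p2 \<cdot> u = p2 \<cdot> v" using mono_cancel[OF g(1) gp] u' v' p g by simp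
  ultimately show "u = v" using product_arrow_eqI[OF P u' v'] by simp
qed

lemma pullback_square:
  assumes "is_pullback C f g P a b"
  shows "P \<in> Obj C" "a \<in> hom C P (Dom C f)" "b \<in> hom C P (Dom C g)" "f \<cdot> a = g \<cdot> b"
  using assms unfolding is_pullback_def by auto

lemma pullback_cod_eq:
  assumes "is_pullback C f g P a b" "f \<in> Arr C" "g \<in> Arr C"
  shows "Cod C f = Cod C g"
proof -
  note sq = pullback_square[OF assms(1)]
  have "Cod C f = Cod C (f \<cdot> a)" using sq(2) assms by simp
  also have "\<dots> = Cod C (g \<cdot> b)" using sq(4) by simp
  also have "\<dots> = Cod C g" using sq(3) assms by simp
  finally show ?thesis .
qed

lemma pullback_universal:
  assumes "is_pullback C f g P a b" "a' \<in> hom C X (Dom C f)" "b' \<in> hom C X (Dom C g)" "f \<cdot> a' = g \<cdot> b'"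
  shows "\<exists>!u. u \<in> hom C X P \<and> a \<cdot> u = a' \<and> b \<cdot> u = b'"
proof -
  have "\<forall>X \<in> Obj C. \<forall>a' \<in> hom C X (Dom C f). \<forall>b' \<in> hom C X (Dom C g). f \<cdot> a' = g \<cdot> b' \<longrightarrow>
      (\<exists>!u. u \<in> hom C X P \<and> a \<cdot> u = a' \<and> b \<cdot> u = b')"
    using assms(1) unfolding is_pullback_def by (elim conjE)
  moreover have "X \<in> Obj C" using assms(2) by auto
  ultimately show ?thesis using assms(2-4) by blast
qed

lemma pullback_factor:
  assumes "is_pullback C f g P a b" "a' \<in> hom C X (Dom C f)" "b' \<in> hom C X (Dom C g)" "f \<cdot> a' = g \<cdot> b'"
  obtains u where "u \<in> hom C X P" "a \<cdot> u = a'" "b \<cdot> u = b'"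
  using pullback_universal[OF assms] by blast

lemma pullback_arrow_eqI:
  assumes pb: "is_pullback C f g P a b" and f: "f \<in> Arr C" and g: "g \<in> Arr C"
    and u: "u \<in> hom C X P" and v: "v \<in> hom C X P" and "a \<cdot> u = a \<cdot> v" "b \<cdot> u = b \<cdot> v"
  shows "u = v"
proof -
  note sq = pullback_square[OF pb]
  have fg: "f \<in> hom C (Dom C f) (Cod C f)" "g \<in> hom C (Dom C g) (Cod C f)"
    using f g pullback_cod_eq[OF pb f g] by simp_all
  have "a \<cdot> u \<in> hom C X (Dom C f)" "b \<cdot> u \<in> hom C X (Dom C g)" using u sq(2,3) by simp_all
  moreover have "f \<cdot> (a \<cdot> u) = g \<cdot> (b \<cdot> u)"
    using comp_assoc[OF u sq(2) fg(1)] comp_assoc[OF u sq(3) fg(2)] sq(4) by simp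
  ultimately have "\<exists>!w. w \<in> hom C X P \<and> a \<cdot> w = a \<cdot> u \<and> b \<cdot> w = b \<cdot> u"
    by (rule pullback_universal[OF pb])
  then show ?thesis using u v assms(6,7)[symmetric] by blast
qed

lemma pullback_of_mono_is_mono:
  assumes pb: "is_pullback C i q P a b" and i: "mono C i" and q: "q \<in> Arr C"
  shows "mono C b"
proof (rule monoI)
  note sq = pullback_square[OF pb]
  have i_arr: "i \<in> Arr C" using i by (rule mono_in_Arr)
  have iq: "i \<in> hom C (Dom C i) (Cod C i)" "q \<in> hom C (Dom C q) (Cod C i)"
    using i_arr q pullback_cod_eq[OF pb i_arr q] by simp_all
  show "b \<in> Arr C" using sq by simp
  fix X u v assume u: "u \<in> hom C X (Dom C b)" and v: "v \<in> hom C X (Dom C b)" and eq: "b \<cdot> u = b \<cdot> v"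
  have u': "u \<in> hom C X P" and v': "v \<in> hom C X P" using u v sq by simp_all
  have "i \<cdot> (a \<cdot> w) = q \<cdot> (b \<cdot> w)" if "w \<in> hom C X P" for w
    using comp_assoc[OF that sq(2) iq(1)] comp_assoc[OF that sq(3) iq(2)] sq(4) by simp
  then have "i \<cdot> (a \<cdot> u) = i \<cdot> (a \<cdot> v)" using u' v' eq by simp
  then have "a \<cdot> u = a \<cdot> v" by (rule mono_cancel[OF i]) (use u' v' sq in simp_all)
  then show "u = v" using pullback_arrow_eqI[OF pb i_arr q u' v'] eq by simp
qed

lemma pullback_along_Id:
  assumes i: "i \<in> hom C N Y"
  shows "is_pullback C i (Id C Y) N (Id C N) i"
  unfolding is_pullback_def
proof (intro conjI ballI impI)
  show "N \<in> Obj C" "Id C N \<in> hom C N (Dom C i)" "i \<in> hom C N (Dom C (Id C Y))" "i \<cdot> Id C N = Id C Y \<cdot> i"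
    using i by auto
  fix X a' b' assume a': "a' \<in> hom C X (Dom C i)" and b': "b' \<in> hom C X (Dom C (Id C Y))"
    and eq: "i \<cdot> a' = Id C Y \<cdot> b'"
  have "b' = i \<cdot> a'" using eq b' i by auto
  then show "\<exists>!u. u \<in> hom C X N \<and> Id C N \<cdot> u = a' \<and> i \<cdot> u = b'"
    using a' i by auto
qed

lemma kernel_square:
  assumes "is_kernel C f k"
  shows "f \<in> Arr C" "k \<in> Arr C" "Cod C k = Dom C f" "zero_arr C (f \<cdot> k)"
  using assms unfolding is_kernel_def by auto

lemma kernel_universal:
  assumes "is_kernel C f k" "t \<in> Arr C" "Cod C t = Dom C f" "zero_arr C (f \<cdot> t)"
  shows "\<exists>!u. u \<in> hom C (Dom C t) (Dom C k) \<and> k \<cdot> u = t"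
proof -
  have "\<forall>t \<in> Arr C. Cod C t = Dom C f \<longrightarrow> zero_arr C (f \<cdot> t) \<longrightarrow>
      (\<exists>!u. u \<in> hom C (Dom C t) (Dom C k) \<and> k \<cdot> u = t)"
    using assms(1) unfolding is_kernel_def by (elim conjE)
  then show ?thesis using assms(2-4) by blast
qed

lemma kernel_factor:
  assumes "is_kernel C f k" "t \<in> Arr C" "Cod C t = Dom C f" "zero_arr C (f \<cdot> t)"
  obtains u where "u \<in> hom C (Dom C t) (Dom C k)" "k \<cdot> u = t"
  using kernel_universal[OF assms] by blast

lemma cokernel_square:
  assumes "is_cokernel C f c"
  shows "f \<in> Arr C" "c \<in> Arr C" "Dom C c = Cod C f" "zero_arr C (c \<cdot> f)"
  using assms unfolding is_cokernel_def by auto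

lemma cokernel_universal:
  assumes "is_cokernel C f c" "t \<in> Arr C" "Dom C t = Cod C f" "zero_arr C (t \<cdot> f)"
  shows "\<exists>!u. u \<in> hom C (Cod C c) (Cod C t) \<and> u \<cdot> c = t"
proof -
  have "\<forall>t \<in> Arr C. Dom C t = Cod C f \<longrightarrow> zero_arr C (t \<cdot> f) \<longrightarrow>
      (\<exists>!u. u \<in> hom C (Cod C c) (Cod C t) \<and> u \<cdot> c = t)"
    using assms(1) unfolding is_cokernel_def by (elim conjE)
  then show ?thesis using assms(2-4) by blast
qed

lemma cokernel_factor:
  assumes "is_cokernel C f c" "t \<in> Arr C" "Dom C t = Cod C f" "zero_arr C (t \<cdot> f)"
  obtains u where "u \<in> hom C (Cod C c) (Cod C t)" "u \<cdot> c = t"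
  using cokernel_universal[OF assms] by blast

lemma kernel_is_mono:
  assumes k: "is_kernel C f k"
  shows "mono C k"
proof (rule monoI)
  note ks = kernel_square[OF k]
  show "k \<in> Arr C" by (rule ks(2))
  fix X u v assume u: "u \<in> hom C X (Dom C k)" and v: "v \<in> hom C X (Dom C k)" and eq: "k \<cdot> u = k \<cdot> v"
  have ku: "k \<cdot> u \<in> Arr C" "Cod C (k \<cdot> u) = Dom C f" using u ks by simp_all
  have "zero_arr C (f \<cdot> (k \<cdot> u))"
    using zero_arr_comp_right[OF ks(4), of u] comp_assoc[OF u, of k "Dom C f" f "Cod C f"] u ks by simp
  then have "\<exists>!w. w \<in> hom C (Dom C (k \<cdot> u)) (Dom C k) \<and> k \<cdot> w = k \<cdot> u"
    by (rule kernel_universal[OF k ku])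
  then show "u = v" using u v eq[symmetric] ks by simp blast
qed

lemma cokernel_is_epi:
  assumes c: "is_cokernel C f c"
  shows "epi C c"
proof (rule epiI)
  note cs = cokernel_square[OF c]
  show "c \<in> Arr C" by (rule cs(2))
  fix Y u v assume u: "u \<in> hom C (Cod C c) Y" and v: "v \<in> hom C (Cod C c) Y" and eq: "u \<cdot> c = v \<cdot> c"
  have uc: "u \<cdot> c \<in> Arr C" "Dom C (u \<cdot> c) = Cod C f" using u cs by simp_all
  have "zero_arr C ((u \<cdot> c) \<cdot> f)"
    using zero_arr_comp_left[OF cs(4), of u] comp_assoc[of f "Dom C f" "Dom C c" c "Cod C c" u Y] u cs by simp
  then have "\<exists>!w. w \<in> hom C (Cod C c) (Cod C (u \<cdot> c)) \<and> w \<cdot> c = u \<cdot> c"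
    by (rule cokernel_universal[OF c uc])
  then show "u = v" using u v eq[symmetric] cs by simp blast
qed

end

locale abelian_context =
  fixes C :: "('o,'m) cat"
  assumes abelian: "abelian C"
begin

sublocale category_context C
  using abelian by unfold_locales (simp add: abelian_def)

lemma zero_obj_exists: "\<exists>z. zero_obj C z"
  and product_exists: "A \<in> Obj C \<Longrightarrow> B \<in> Obj C \<Longrightarrow> \<exists>P p1 p2. is_product C A B P p1 p2"
  and kernel_exists: "f \<in> Arr C \<Longrightarrow> \<exists>k. is_kernel C f k"
  and cokernel_exists: "f \<in> Arr C \<Longrightarrow> \<exists>c. is_cokernel C f c"
  and mono_is_kernel: "mono C m \<Longrightarrow> \<exists>f. is_kernel C f m"
  and epi_is_cokernel: "epi C e \<Longrightarrow> \<exists>f. is_cokernel C f e"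
  using abelian by (simp_all add: abelian_def)

definition zero_map :: "'o \<Rightarrow> 'o \<Rightarrow> 'm" where
  "zero_map A B = (SOME f. f \<in> hom C A B \<and> zero_arr C f)"

lemma zero_map_in_hom: "A \<in> Obj C \<Longrightarrow> B \<in> Obj C \<Longrightarrow> zero_map A B \<in> hom C A B"
  and zero_map_is_zero: "A \<in> Obj C \<Longrightarrow> B \<in> Obj C \<Longrightarrow> zero_arr C (zero_map A B)"
proof -
  assume "A \<in> Obj C" "B \<in> Obj C"
  then have "\<exists>f. f \<in> hom C A B \<and> zero_arr C f"
    using zero_arr_exists zero_obj_exists by blast
  then have "zero_map A B \<in> hom C A B \<and> zero_arr C (zero_map A B)"
    unfolding zero_map_def by (rule someI_ex)
  then show "zero_map A B \<in> hom C A B" "zero_arr C (zero_map A B)" by simp_all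
qed

lemma zero_arr_eq_zero_map:
  assumes "zero_arr C f" "f \<in> hom C A B"
  shows "f = zero_map A B"
proof -
  have "A \<in> Obj C" "B \<in> Obj C" using assms(2) by auto
  then show ?thesis
    using zero_arr_unique[OF assms(1) zero_map_is_zero] zero_map_in_hom assms(2) by simp
qed

lemma mono_is_kernel_of_cokernel:
  assumes m: "mono C m" and c: "is_cokernel C m c"
  shows "is_kernel C c m"
proof -
  obtain f where f: "is_kernel C f m" using mono_is_kernel[OF m] by blast
  note fs = kernel_square[OF f] and cs = cokernel_square[OF c]
  obtain v where v: "v \<in> hom C (Cod C c) (Cod C f)" "v \<cdot> c = f"
    using cokernel_factor[OF c fs(1)] fs by auto
  show ?thesis unfolding is_kernel_def
  proof (intro conjI ballI impI)
    show "c \<in> Arr C" "m \<in> Arr C" "Cod C m = Dom C c" "zero_arr C (c \<cdot> m)" using cs by auto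
    fix t assume t: "t \<in> Arr C" "Cod C t = Dom C c" "zero_arr C (c \<cdot> t)"
    have "f \<cdot> t = v \<cdot> (c \<cdot> t)" using comp_assoc[of t _ _ c _ v] v t cs by auto
    then have "zero_arr C (f \<cdot> t)" using zero_arr_comp_left[OF t(3), of v] v t cs by auto
    moreover have "Cod C t = Dom C f" using t cs fs by simp
    ultimately show "\<exists>!u. u \<in> hom C (Dom C t) (Dom C m) \<and> m \<cdot> u = t"
      using kernel_universal[OF f t(1)] by blast
  qed
qed

lemma epi_is_cokernel_of_kernel:
  assumes e: "epi C e" and k: "is_kernel C e k"
  shows "is_cokernel C k e"
proof -
  obtain f where f: "is_cokernel C f e" using epi_is_cokernel[OF e] by blast
  note fs = cokernel_square[OF f] and ks = kernel_square[OF k]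
  obtain v where v: "v \<in> hom C (Dom C f) (Dom C k)" "k \<cdot> v = f"
    using kernel_factor[OF k fs(1)] fs by auto
  show ?thesis unfolding is_cokernel_def
  proof (intro conjI ballI impI)
    show "k \<in> Arr C" "e \<in> Arr C" "Dom C e = Cod C k" "zero_arr C (e \<cdot> k)" using ks by auto
    fix t assume t: "t \<in> Arr C" "Dom C t = Cod C k" "zero_arr C (t \<cdot> k)"
    have "t \<cdot> f = (t \<cdot> k) \<cdot> v" using comp_assoc[of v _ _ k _ t] v t ks by auto
    then have "zero_arr C (t \<cdot> f)" using zero_arr_comp_right[OF t(3), of v] v t ks by auto
    moreover have "Dom C t = Cod C f" using t ks fs by simp
    ultimately show "\<exists>!u. u \<in> hom C (Cod C e) (Cod C t) \<and> u \<cdot> e = t"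
      using cokernel_universal[OF f t(1)] by blast
  qed
qed

lemma mono_has_cokernel:
  assumes "mono C m"
  obtains c where "is_cokernel C m c" "is_kernel C c m"
  using cokernel_exists[OF mono_in_Arr[OF assms]] mono_is_kernel_of_cokernel[OF assms] by blast

section \<open>Pullbacks along monos in an abelian category\<close>

lemma pullback_is_kernel:
  assumes pb: "is_pullback C i q P a b" and i: "mono C i" and q: "q \<in> Arr C"
    and c: "is_cokernel C i c" "is_kernel C c i"
  shows "is_kernel C (c \<cdot> q) b"
  unfolding is_kernel_def
proof (intro conjI ballI impI)
  note sq = pullback_square[OF pb] and cs = cokernel_square[OF c(1)]
  have i_arr: "i \<in> Arr C" using i by (rule mono_in_Arr)
  have i_hom: "i \<in> hom C (Dom C i) (Cod C i)" and q_hom: "q \<in> hom C (Dom C q) (Cod C i)"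
    and c_hom: "c \<in> hom C (Cod C i) (Cod C c)"
    using i_arr q cs pullback_cod_eq[OF pb i_arr q] by simp_all
  show "c \<cdot> q \<in> Arr C" "b \<in> Arr C" "Cod C b = Dom C (c \<cdot> q)" using q_hom c_hom sq by auto
  have "(c \<cdot> q) \<cdot> b = (c \<cdot> i) \<cdot> a"
    using comp_assoc[OF sq(3) q_hom c_hom] comp_assoc[OF sq(2) i_hom c_hom] sq(4) by simp
  then show "zero_arr C ((c \<cdot> q) \<cdot> b)" using zero_arr_comp_right[OF cs(4), of a] sq i_arr cs by simp
  fix t assume t: "t \<in> Arr C" "Cod C t = Dom C (c \<cdot> q)" "zero_arr C ((c \<cdot> q) \<cdot> t)"
  have t_hom: "t \<in> hom C (Dom C t) (Dom C q)" using t q_hom c_hom by simp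
  have "zero_arr C (c \<cdot> (q \<cdot> t))" using comp_assoc[OF t_hom q_hom c_hom] t(3) by simp
  then obtain t' where t': "t' \<in> hom C (Dom C t) (Dom C i)" "i \<cdot> t' = q \<cdot> t"
    using kernel_factor[OF c(2), of "q \<cdot> t"] t_hom q_hom cs by auto
  obtain u where u: "u \<in> hom C (Dom C t) P" "b \<cdot> u = t"
    using pullback_factor[OF pb t'(1) t_hom t'(2)] by blast
  have b_mono: "mono C b" by (rule pullback_of_mono_is_mono[OF pb i q])
  show "\<exists>!u. u \<in> hom C (Dom C t) (Dom C b) \<and> b \<cdot> u = t"
  proof (rule ex1I)
    show "u \<in> hom C (Dom C t) (Dom C b) \<and> b \<cdot> u = t" using u sq by simp
    fix v assume "v \<in> hom C (Dom C t) (Dom C b) \<and> b \<cdot> v = t"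
    then show "v = u" using mono_cancel[OF b_mono, of v u] u sq by simp
  qed
qed

lemma pullback_along_mono_exists:
  assumes i: "mono C i" and q: "q \<in> Arr C" "Cod C q = Cod C i"
  obtains P a b where "is_pullback C i q P a b"
proof -
  have i_arr: "i \<in> Arr C" using i by (rule mono_in_Arr)
  obtain c where c: "is_cokernel C i c" "is_kernel C c i" using mono_has_cokernel[OF i] by blast
  note cs = cokernel_square[OF c(1)]
  have i_hom: "i \<in> hom C (Dom C i) (Cod C i)" and q_hom: "q \<in> hom C (Dom C q) (Cod C i)"
    and c_hom: "c \<in> hom C (Cod C i) (Cod C c)"
    using i_arr q cs by simp_all
  obtain b where b: "is_kernel C (c \<cdot> q) b" using kernel_exists[of "c \<cdot> q"] q_hom c_hom by auto
  note bs = kernel_square[OF b]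
  have b_hom: "b \<in> hom C (Dom C b) (Dom C q)" using bs q_hom c_hom by simp
  have "zero_arr C (c \<cdot> (q \<cdot> b))" using bs(4) comp_assoc[OF b_hom q_hom c_hom] by simp
  then obtain a where a: "a \<in> hom C (Dom C b) (Dom C i)" "i \<cdot> a = q \<cdot> b"
    using kernel_factor[OF c(2), of "q \<cdot> b"] b_hom q_hom c_hom by auto
  have "is_pullback C i q (Dom C b) a b"
    unfolding is_pullback_def
  proof (intro conjI ballI impI)
    show "Dom C b \<in> Obj C" "a \<in> hom C (Dom C b) (Dom C i)" "b \<in> hom C (Dom C b) (Dom C q)" "i \<cdot> a = q \<cdot> b"
      using a b_hom by auto
    fix X a' b' assume a': "a' \<in> hom C X (Dom C i)" and b': "b' \<in> hom C X (Dom C q)" and eq: "i \<cdot> a' = q \<cdot> b'"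
    have "(c \<cdot> q) \<cdot> b' = (c \<cdot> i) \<cdot> a'"
      using comp_assoc[OF b' q_hom c_hom] comp_assoc[OF a' i_hom c_hom] eq by simp
    then have "zero_arr C ((c \<cdot> q) \<cdot> b')" using zero_arr_comp_right[OF cs(4), of a'] a' i_arr cs by simp
    then obtain u where u: "u \<in> hom C X (Dom C b)" "b \<cdot> u = b'"
      using kernel_factor[OF b, of b'] b' q_hom c_hom by auto
    have "i \<cdot> (a \<cdot> u) = i \<cdot> a'"
      using comp_assoc[OF u(1) a(1) i_hom] comp_assoc[OF u(1) b_hom q_hom] a(2) u(2) eq by simp
    then have au: "a \<cdot> u = a'" using mono_cancel[OF i, of "a \<cdot> u" a' X] u a a' by simp
    have b_mono: "mono C b" by (rule kernel_is_mono[OF b])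
    show "\<exists>!u. u \<in> hom C X (Dom C b) \<and> a \<cdot> u = a' \<and> b \<cdot> u = b'"
    proof (rule ex1I)
      show "u \<in> hom C X (Dom C b) \<and> a \<cdot> u = a' \<and> b \<cdot> u = b'" using u au by simp
      fix v assume "v \<in> hom C X (Dom C b) \<and> a \<cdot> v = a' \<and> b \<cdot> v = b'"
      then show "v = u" using mono_cancel[OF b_mono, of v u X] u by simp
    qed
  qed
  then show ?thesis by (rule that)
qed

text \<open>Constructed as the pullback of the two sections (Id, g) and (Id, h) of the projection
  N \<times> T \<rightarrow> N.\<close>

lemma equalizer_exists:
  assumes g: "g \<in> hom C N T" and h: "h \<in> hom C N T"
  obtains k E where "k \<in> hom C E N" "mono C k" "g \<cdot> k = h \<cdot> k"
    "\<And>X a. a \<in> hom C X N \<Longrightarrow> g \<cdot> a = h \<cdot> a \<Longrightarrow> \<exists>u \<in> hom C X E. k \<cdot> u = a"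
proof -
  have N: "N \<in> Obj C" and T: "T \<in> Obj C" using g by auto
  obtain NT p1 p2 where pr: "is_product C N T NT p1 p2" using product_exists[OF N T] by blast
  have p: "p1 \<in> hom C NT N" "p2 \<in> hom C NT T" using pr unfolding is_product_def by auto
  obtain u1 where u1: "u1 \<in> hom C N NT" "p1 \<cdot> u1 = Id C N" "p2 \<cdot> u1 = g"
    using product_pairing[OF pr _ g, of "Id C N"] N by auto
  obtain u2 where u2: "u2 \<in> hom C N NT" "p1 \<cdot> u2 = Id C N" "p2 \<cdot> u2 = h"
    using product_pairing[OF pr _ h, of "Id C N"] N by auto
  have m1: "mono C u1" using section_is_mono[OF u1(1) p(1) u1(2)] .
  obtain E k k' where pb: "is_pullback C u1 u2 E k k'"
    using pullback_along_mono_exists[OF m1, of u2] u1 u2 by auto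
  note sq = pullback_square[OF pb]
  have k: "k \<in> hom C E N" "k' \<in> hom C E N" using sq u1 u2 by auto
  have proj_eq: "p \<cdot> (u1 \<cdot> k) = p \<cdot> (u2 \<cdot> k')" for p by (simp add: sq(4))
  have "k = k'"
    using proj_eq[of p1] comp_assoc[OF k(1) u1(1) p(1)] comp_assoc[OF k(2) u2(1) p(1)] u1 u2 k by simp
  moreover have "g \<cdot> k = h \<cdot> k'"
    using proj_eq[of p2] comp_assoc[OF k(1) u1(1) p(2)] comp_assoc[OF k(2) u2(1) p(2)] u1 u2 by simp
  moreover have "mono C k'" using pullback_of_mono_is_mono[OF pb m1] u2 by simp
  moreover have "\<exists>u \<in> hom C X E. k \<cdot> u = a" if a: "a \<in> hom C X N" and eq: "g \<cdot> a = h \<cdot> a" for X a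
  proof -
    have "u1 \<cdot> a = u2 \<cdot> a"
    proof (rule product_arrow_eqI[OF pr])
      show "u1 \<cdot> a \<in> hom C X NT" "u2 \<cdot> a \<in> hom C X NT" using a u1 u2 by auto
      show "p1 \<cdot> (u1 \<cdot> a) = p1 \<cdot> (u2 \<cdot> a)" "p2 \<cdot> (u1 \<cdot> a) = p2 \<cdot> (u2 \<cdot> a)"
        using comp_assoc[OF a u1(1)] comp_assoc[OF a u2(1)] p u1 u2 a eq by simp_all
    qed
    then obtain u where "u \<in> hom C X E" "k \<cdot> u = a"
      using pullback_factor[OF pb, of a X a] a u1 u2 by auto
    then show ?thesis by blast
  qed
  ultimately show ?thesis using that k by auto
qed

text \<open>The cokernel d of i \<cdot> k kills q \<cdot> b, so it factors through the cokernel c \<cdot> q of b;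
  hence d kills i, i.e. i factors through i \<cdot> k.\<close>

lemma pullback_of_epi_extremal:
  assumes pb: "is_pullback C i q P a b" and i: "mono C i" and q: "epi C q"
    and k: "k \<in> hom C E (Dom C i)" "mono C k" and a0: "a0 \<in> hom C P E" "k \<cdot> a0 = a"
  obtains s where "s \<in> hom C (Dom C i) E" "k \<cdot> s = Id C (Dom C i)"
proof -
  note sq = pullback_square[OF pb]
  have i_arr: "i \<in> Arr C" and q_arr: "q \<in> Arr C" using i q by (simp_all add: mono_in_Arr epi_in_Arr)
  define N Y where "N = Dom C i" and "Y = Cod C i"
  have N: "N \<in> Obj C" and i_hom: "i \<in> hom C N Y" and k_hom: "k \<in> hom C E N"
    using i_arr k unfolding N_def Y_def by simp_all
  have q_hom: "q \<in> hom C (Dom C q) Y" and b_hom: "b \<in> hom C P (Dom C q)"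
    using q_arr sq(3) pullback_cod_eq[OF pb i_arr q_arr] unfolding Y_def by simp_all
  obtain c where c: "is_cokernel C i c" "is_kernel C c i" using mono_has_cokernel[OF i] by blast
  note cs = cokernel_square[OF c(1)]
  have c_hom: "c \<in> hom C Y (Cod C c)" using cs i_hom by simp
  have cq_coker: "is_cokernel C b (c \<cdot> q)"
  proof (rule epi_is_cokernel_of_kernel)
    show "epi C (c \<cdot> q)" using epi_comp[OF q cokernel_is_epi[OF c(1)]] q_hom c_hom by simp
    show "is_kernel C (c \<cdot> q) b" using pullback_is_kernel[OF pb i q_arr c] .
  qed
  have ik_hom: "i \<cdot> k \<in> hom C E Y" using i_hom k_hom by simp
  have "mono C (i \<cdot> k)" using mono_comp[OF k(2) i] k_hom i_hom by simp
  then obtain d where d: "is_cokernel C (i \<cdot> k) d" "is_kernel C d (i \<cdot> k)" by (rule mono_has_cokernel)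
  note ds = cokernel_square[OF d(1)]
  have d_hom: "d \<in> hom C Y (Cod C d)" using ds ik_hom by simp
  have "(d \<cdot> q) \<cdot> b = (d \<cdot> (i \<cdot> k)) \<cdot> a0"
    using comp_assoc[OF b_hom q_hom d_hom] comp_assoc[OF a0(1) k_hom i_hom]
      comp_assoc[OF a0(1) ik_hom d_hom] sq(4) a0(2) by simp
  then have "zero_arr C ((d \<cdot> q) \<cdot> b)" using zero_arr_comp_right[OF ds(4), of a0] a0 ik_hom ds by simp
  moreover have "d \<cdot> q \<in> Arr C" "Dom C (d \<cdot> q) = Cod C b" using q_hom d_hom b_hom by simp_all
  ultimately obtain v where "v \<in> hom C (Cod C (c \<cdot> q)) (Cod C (d \<cdot> q))" "v \<cdot> (c \<cdot> q) = d \<cdot> q"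
    using cokernel_factor[OF cq_coker] by blast
  then have v: "v \<in> hom C (Cod C c) (Cod C d)" "v \<cdot> (c \<cdot> q) = d \<cdot> q" using q_hom c_hom d_hom by simp_all
  have "(v \<cdot> c) \<cdot> q = d \<cdot> q" using comp_assoc[OF q_hom c_hom v(1)] v by simp
  moreover have "v \<cdot> c \<in> hom C (Cod C q) (Cod C d)" "d \<in> hom C (Cod C q) (Cod C d)"
    using v c_hom d_hom q_hom by simp_all
  ultimately have "v \<cdot> c = d" by (rule epi_cancel[OF q])
  then have "d \<cdot> i = v \<cdot> (c \<cdot> i)" using comp_assoc[OF i_hom c_hom v(1)] by simp
  then have "zero_arr C (d \<cdot> i)" using zero_arr_comp_left[OF cs(4), of v] v c_hom i_hom by simp
  moreover have "i \<in> Arr C" "Cod C i = Dom C d" using i_hom d_hom by simp_all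
  ultimately obtain s where "s \<in> hom C (Dom C i) (Dom C (i \<cdot> k))" "(i \<cdot> k) \<cdot> s = i"
    using kernel_factor[OF d(2)] by blast
  then have s: "s \<in> hom C N E" "(i \<cdot> k) \<cdot> s = i" using i_hom ik_hom by simp_all
  have "i \<cdot> (k \<cdot> s) = i \<cdot> Id C N" using comp_assoc[OF s(1) k_hom i_hom] s i_hom by simp
  moreover have "k \<cdot> s \<in> hom C N (Dom C i)" "Id C N \<in> hom C N (Dom C i)" using s k_hom i_hom N by simp_all
  ultimately have "k \<cdot> s = Id C N" by (rule mono_cancel[OF i])
  then show ?thesis using that s(1) unfolding N_def by blast
qed

lemma pullback_of_epi_is_epi:
  assumes pb: "is_pullback C i q P a b" and i: "mono C i" and q: "epi C q"
  shows "epi C a"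
proof (rule epiI)
  note sq = pullback_square[OF pb]
  show "a \<in> Arr C" using sq by simp
  fix T g h assume g: "g \<in> hom C (Cod C a) T" and h: "h \<in> hom C (Cod C a) T" and eq: "g \<cdot> a = h \<cdot> a"
  have gh: "g \<in> hom C (Dom C i) T" "h \<in> hom C (Dom C i) T" using g h sq by simp_all
  obtain k E where k: "k \<in> hom C E (Dom C i)" "mono C k" "g \<cdot> k = h \<cdot> k"
    and factor: "\<And>X a'. a' \<in> hom C X (Dom C i) \<Longrightarrow> g \<cdot> a' = h \<cdot> a' \<Longrightarrow> \<exists>u \<in> hom C X E. k \<cdot> u = a'"
    using equalizer_exists[OF gh] by metis
  from factor[OF sq(2) eq] obtain a0 where a0: "a0 \<in> hom C P E" "k \<cdot> a0 = a" ..
  obtain s where s: "s \<in> hom C (Dom C i) E" "k \<cdot> s = Id C (Dom C i)"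
    by (rule pullback_of_epi_extremal[OF pb i q k(1,2) a0])
  have "g = g \<cdot> (k \<cdot> s)" using s gh by simp
  also have "\<dots> = (g \<cdot> k) \<cdot> s" by (rule comp_assoc[OF s(1) k(1) gh(1)])
  also have "\<dots> = h \<cdot> (k \<cdot> s)" using comp_assoc[OF s(1) k(1) gh(2)] k(3) by simp
  also have "\<dots> = h" using s gh by simp
  finally show "g = h" .
qed

section \<open>Composition of spans\<close>

lemma valid_span_iff:
  "valid_span C M M' (N, p, i) \<longleftrightarrow> N \<in> Obj C \<and> p \<in> hom C N M \<and> epi C p \<and> i \<in> hom C N M' \<and> mono C i"
  by (simp add: valid_span_def)

lemma span_step_iff:
  "span_step C (N, p, i) (N', p', i') \<longleftrightarrow> (\<exists>j \<in> hom C N N'. mono C j \<and> p' \<cdot> j = p \<and> i' \<cdot> j = i)"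
  by (simp add: span_step_def)

lemma span_comps_iff:
  "t \<in> span_comps C (N, p, i) (K, q, k) \<longleftrightarrow> (\<exists>P a b. t = (P, p \<cdot> a, k \<cdot> b) \<and> is_pullback C i q P a b)"
  by (simp add: span_comps_def)

lemma span_comps_nonempty:
  assumes "valid_span C X Y f" "valid_span C Y Z g"
  obtains t where "t \<in> span_comps C f g"
proof -
  obtain N p i K q k where fg: "f = (N, p, i)" "g = (K, q, k)" by (cases f, cases g) auto
  then have "mono C i" "q \<in> Arr C" "Cod C q = Cod C i" using assms by (auto simp: valid_span_iff)
  then obtain P a b where "is_pullback C i q P a b" by (rule pullback_along_mono_exists)
  then have "(P, p \<cdot> a, k \<cdot> b) \<in> span_comps C f g" unfolding fg span_comps_iff by blast
  then show ?thesis by (rule that)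
qed

lemma span_comps_valid:
  assumes f: "valid_span C X Y f" and g: "valid_span C Y Z g" and t: "t \<in> span_comps C f g"
  shows "valid_span C X Z t"
proof -
  obtain N p i K q k where fg: "f = (N, p, i)" "g = (K, q, k)" by (cases f, cases g) auto
  then obtain P a b where t_eq: "t = (P, p \<cdot> a, k \<cdot> b)" and pb: "is_pullback C i q P a b"
    using t by (auto simp: span_comps_iff)
  note sq = pullback_square[OF pb]
  have fv: "p \<in> hom C N X" "epi C p" "i \<in> hom C N Y" "mono C i"
    and gv: "q \<in> hom C K Y" "epi C q" "k \<in> hom C K Z" "mono C k"
    using f g fg by (auto simp: valid_span_iff)
  have "epi C (p \<cdot> a)" using epi_comp[OF pullback_of_epi_is_epi[OF pb fv(4) gv(2)] fv(2)] sq fv by simp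
  moreover have "mono C (k \<cdot> b)"
    using mono_comp[OF pullback_of_mono_is_mono[OF pb fv(4)] gv(4)] sq gv by simp
  ultimately show ?thesis using t_eq sq fv gv by (simp add: valid_span_iff)
qed

lemma span_step_comp_left:
  assumes f: "valid_span C X Y (N, p, i)" and f': "valid_span C X Y (N', p', i')"
    and step: "span_step C (N, p, i) (N', p', i')" and g: "valid_span C Y Z (K, q, k)"
    and pb: "is_pullback C i q P a b" and pb': "is_pullback C i' q P' a' b'"
  shows "span_step C (P, p \<cdot> a, k \<cdot> b) (P', p' \<cdot> a', k \<cdot> b')"
proof -
  note sq = pullback_square[OF pb] and sq' = pullback_square[OF pb']
  have fv: "p \<in> hom C N X" "i \<in> hom C N Y" "mono C i" and fv': "p' \<in> hom C N' X" "i' \<in> hom C N' Y"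
    and gv: "q \<in> hom C K Y" "k \<in> hom C K Z"
    using f f' g by (auto simp: valid_span_iff)
  obtain j where j: "j \<in> hom C N N'" "mono C j" "p' \<cdot> j = p" "i' \<cdot> j = i"
    using step by (auto simp: span_step_iff)
  have a: "a \<in> hom C P N" "b \<in> hom C P K" and a': "a' \<in> hom C P' N'" "b' \<in> hom C P' K"
    using sq sq' fv fv' gv by auto
  have "j \<cdot> a \<in> hom C P N'" "b \<in> hom C P K" "i' \<cdot> (j \<cdot> a) = q \<cdot> b"
    using comp_assoc[OF a(1) j(1) fv'(2)] a j sq by simp_all
  then obtain u where u: "u \<in> hom C P P'" "a' \<cdot> u = j \<cdot> a" "b' \<cdot> u = b"
    using pullback_factor[OF pb'] fv' gv by auto
  have "mono C u"
    using mono_if_mono_comp[OF _ u(1) a'(2)] pullback_of_mono_is_mono[OF pb fv(3)] u gv by simp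
  moreover have "(p' \<cdot> a') \<cdot> u = p \<cdot> a"
    using comp_assoc[OF u(1) a'(1) fv'(1)] comp_assoc[OF a(1) j(1) fv'(1)] u j by simp
  moreover have "(k \<cdot> b') \<cdot> u = k \<cdot> b" using comp_assoc[OF u(1) a'(2) gv(2)] u by simp
  ultimately show ?thesis using u(1) by (auto simp: span_step_iff)
qed

lemma span_step_comp_right:
  assumes f: "valid_span C X Y (N, p, i)" and g: "valid_span C Y Z (K, q, k)"
    and g': "valid_span C Y Z (K', q', k')" and step: "span_step C (K, q, k) (K', q', k')"
    and pb: "is_pullback C i q P a b" and pb': "is_pullback C i q' P' a' b'"
  shows "span_step C (P, p \<cdot> a, k \<cdot> b) (P', p \<cdot> a', k' \<cdot> b')"
proof -
  note sq = pullback_square[OF pb] and sq' = pullback_square[OF pb']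
  have fv: "p \<in> hom C N X" "i \<in> hom C N Y" "mono C i"
    and gv: "q \<in> hom C K Y" "k \<in> hom C K Z" and gv': "q' \<in> hom C K' Y" "k' \<in> hom C K' Z"
    using f g g' by (auto simp: valid_span_iff)
  obtain j where j: "j \<in> hom C K K'" "mono C j" "q' \<cdot> j = q" "k' \<cdot> j = k"
    using step by (auto simp: span_step_iff)
  have a: "a \<in> hom C P N" "b \<in> hom C P K" and a': "a' \<in> hom C P' N" "b' \<in> hom C P' K'"
    using sq sq' fv gv gv' by auto
  have "a \<in> hom C P N" "j \<cdot> b \<in> hom C P K'" "i \<cdot> a = q' \<cdot> (j \<cdot> b)"
    using comp_assoc[OF a(2) j(1) gv'(1)] a j sq by simp_all
  then obtain u where u: "u \<in> hom C P P'" "a' \<cdot> u = a" "b' \<cdot> u = j \<cdot> b"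
    using pullback_factor[OF pb'] fv gv' by auto
  have "mono C (j \<cdot> b)" using mono_comp[OF pullback_of_mono_is_mono[OF pb fv(3)] j(2)] a j gv by simp
  then have "mono C u" using mono_if_mono_comp[OF _ u(1) a'(2)] u by simp
  moreover have "(p \<cdot> a') \<cdot> u = p \<cdot> a" using comp_assoc[OF u(1) a'(1) fv(1)] u by simp
  moreover have "(k' \<cdot> b') \<cdot> u = k \<cdot> b"
    using comp_assoc[OF u(1) a'(2) gv'(2)] comp_assoc[OF a(2) j(1) gv'(2)] u j by simp
  ultimately show ?thesis using u(1) by (auto simp: span_step_iff)
qed

lemma span_step_refl: "valid_span C X Y (N, p, i) \<Longrightarrow> span_step C (N, p, i) (N, p, i)"
  using Id_mono by (auto simp: valid_span_iff span_step_iff intro!: bexI[of _ "Id C N"])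

lemma span_equiv_sym: "span_equiv C X Y s t \<Longrightarrow> span_equiv C X Y t s"
  unfolding span_equiv_def by (rule symp_rtranclp[THEN sympD]) (auto intro: sympI)

lemma span_equiv_trans: "span_equiv C X Y s t \<Longrightarrow> span_equiv C X Y t u \<Longrightarrow> span_equiv C X Y s u"
  unfolding span_equiv_def by (rule rtranclp_trans)

lemma span_equiv_if_step:
  "valid_span C X Y s \<Longrightarrow> valid_span C X Y t \<Longrightarrow> span_step C s t \<Longrightarrow> span_equiv C X Y s t"
  unfolding span_equiv_def by (rule r_into_rtranclp) simp

lemma span_equiv_comps_step_left:
  assumes f: "valid_span C X Y f" and f': "valid_span C X Y f'" and step: "span_step C f f'"
    and g: "valid_span C Y Z g" and t: "t \<in> span_comps C f g" and t': "t' \<in> span_comps C f' g"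
  shows "span_equiv C X Z t t'"
proof -
  obtain N p i N' p' i' K q k where fg: "f = (N, p, i)" "f' = (N', p', i')" "g = (K, q, k)"
    by (metis prod_cases3)
  obtain P a b P' a' b' where tt': "t = (P, p \<cdot> a, k \<cdot> b)" "t' = (P', p' \<cdot> a', k \<cdot> b')"
    and pb: "is_pullback C i q P a b" and pb': "is_pullback C i' q P' a' b'"
    using t t' fg by (auto simp: span_comps_iff)
  have "span_step C t t'" using span_step_comp_left[OF _ _ _ _ pb pb'] f f' step g fg tt' by simp
  then show ?thesis using span_equiv_if_step span_comps_valid[OF f g t] span_comps_valid[OF f' g t'] by blast
qed

lemma span_equiv_comps_step_right:
  assumes f: "valid_span C X Y f" and g: "valid_span C Y Z g" and g': "valid_span C Y Z g'"
    and step: "span_step C g g'" and t: "t \<in> span_comps C f g" and t': "t' \<in> span_comps C f g'"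
  shows "span_equiv C X Z t t'"
proof -
  obtain N p i K q k K' q' k' where fg: "f = (N, p, i)" "g = (K, q, k)" "g' = (K', q', k')"
    by (metis prod_cases3)
  obtain P a b P' a' b' where tt': "t = (P, p \<cdot> a, k \<cdot> b)" "t' = (P', p \<cdot> a', k' \<cdot> b')"
    and pb: "is_pullback C i q P a b" and pb': "is_pullback C i q' P' a' b'"
    using t t' fg by (auto simp: span_comps_iff)
  have "span_step C t t'" using span_step_comp_right[OF _ _ _ _ pb pb'] f g g' step fg tt' by simp
  then show ?thesis using span_equiv_if_step span_comps_valid[OF f g t] span_comps_valid[OF f g' t'] by blast
qed

lemma span_equiv_comps_left:
  assumes equiv: "span_equiv C X Y f f'" and f: "valid_span C X Y f" and g: "valid_span C Y Z g"
    and t: "t \<in> span_comps C f g" and t': "t' \<in> span_comps C f' g"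
  shows "span_equiv C X Z t t'"
  using equiv t' unfolding span_equiv_def[of C X Y]
proof (induction arbitrary: t' rule: rtranclp_induct)
  case base
  have "span_step C f f" using span_step_refl[of X Y] f by (metis prod_cases3)
  then show ?case using span_equiv_comps_step_left[OF f f _ g t base] by simp
next
  case (step f1 f2)
  obtain t1 where t1: "t1 \<in> span_comps C f1 g" using span_comps_nonempty[of X Y f1 Z g] step.hyps(2) g by blast
  have "span_equiv C X Z t1 t'"
    using span_equiv_comps_step_left[OF _ _ _ g t1 step.prems] span_equiv_comps_step_left[OF _ _ _ g step.prems t1]
      span_equiv_sym step.hyps(2) by blast
  then show ?case using span_equiv_trans step.IH[OF t1] by blast
qed

lemma span_equiv_comps_right:
  assumes equiv: "span_equiv C Y Z g g'" and f: "valid_span C X Y f" and g: "valid_span C Y Z g"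
    and t: "t \<in> span_comps C f g" and t': "t' \<in> span_comps C f g'"
  shows "span_equiv C X Z t t'"
  using equiv t' unfolding span_equiv_def[of C Y Z]
proof (induction arbitrary: t' rule: rtranclp_induct)
  case base
  have "span_step C g g" using span_step_refl[of Y Z] g by (metis prod_cases3)
  then show ?case using span_equiv_comps_step_right[OF f g g _ t base] by simp
next
  case (step g1 g2)
  obtain t1 where t1: "t1 \<in> span_comps C f g1" using span_comps_nonempty[of X Y f Z g1] step.hyps(2) f by blast
  have "span_equiv C X Z t1 t'"
    using span_equiv_comps_step_right[OF f _ _ _ t1 step.prems] span_equiv_comps_step_right[OF f _ _ _ step.prems t1]
      span_equiv_sym step.hyps(2) by blast
  then show ?case using span_equiv_trans step.IH[OF t1] by blast
qed

lemma Qcomp_span_class: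
  assumes f: "valid_span C X Y f" and g: "valid_span C Y Z g"
    and t: "t \<in> span_comps C f g" and equiv: "span_equiv C X Z t u"
  shows "Qcomp C X Y Z (span_class C Y Z g) (span_class C X Y f) = span_class C X Z u"
proof (intro equalityI subsetI)
  fix v assume "v \<in> Qcomp C X Y Z (span_class C Y Z g) (span_class C X Y f)"
  then obtain f' g' t' where f': "valid_span C X Y f'" "span_equiv C X Y f f'"
    and g': "valid_span C Y Z g'" "span_equiv C Y Z g g'"
    and t': "t' \<in> span_comps C f' g'" and v: "valid_span C X Z v" "span_equiv C X Z t' v"
    unfolding Qcomp_def span_class_def by blast
  obtain t1 where t1: "t1 \<in> span_comps C f g'" using span_comps_nonempty[OF f g'(1)] by blast
  have "span_equiv C X Z t t1" using span_equiv_comps_right[OF g'(2) f g t t1] .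
  moreover have "span_equiv C X Z t1 t'" using span_equiv_comps_left[OF f'(2) f g'(1) t1 t'] .
  ultimately show "v \<in> span_class C X Z u"
    using v equiv span_equiv_trans span_equiv_sym unfolding span_class_def by blast
next
  fix v assume "v \<in> span_class C X Z u"
  moreover have "f \<in> span_class C X Y f" "g \<in> span_class C Y Z g"
    using f g unfolding span_class_def span_equiv_def by auto
  ultimately show "v \<in> Qcomp C X Y Z (span_class C Y Z g) (span_class C X Y f)"
    using t equiv span_equiv_trans unfolding Qcomp_def span_class_def by blast
qed

section \<open>An absorbing morphism into a product\<close>

lemma span_equivI:
  assumes "valid_span C X Y (N, p, i)" "valid_span C X Y (N', p', i')"
    and "j \<in> hom C N N'" "mono C j" "p' \<cdot> j = p" "i' \<cdot> j = i"
  shows "span_equiv C X Y (N, p, i) (N', p', i')"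
  by (rule span_equiv_if_step[OF assms(1,2)]) (use assms(3-6) in \<open>auto simp: span_step_iff\<close>)

lemma valid_span_of_mono: "e \<in> hom C Y Z \<Longrightarrow> mono C e \<Longrightarrow> valid_span C Y Z (Y, Id C Y, e)"
  using Id_epi by (auto simp: valid_span_iff)

lemma product_injections:
  assumes X: "X \<in> Obj C" and Y: "Y \<in> Obj C"
  obtains Z \<pi>1 \<pi>2 e1 e2 where "is_product C Y X Z \<pi>1 \<pi>2"
    "e1 \<in> hom C Y Z" "\<pi>1 \<cdot> e1 = Id C Y" "\<pi>2 \<cdot> e1 = zero_map Y X"
    "e2 \<in> hom C X Z" "\<pi>1 \<cdot> e2 = zero_map X Y" "\<pi>2 \<cdot> e2 = Id C X"
proof -
  obtain Z \<pi>1 \<pi>2 where pr: "is_product C Y X Z \<pi>1 \<pi>2" using product_exists[OF Y X] by blast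
  obtain e1 where "e1 \<in> hom C Y Z" "\<pi>1 \<cdot> e1 = Id C Y" "\<pi>2 \<cdot> e1 = zero_map Y X"
    using product_pairing[OF pr _ zero_map_in_hom[OF Y X], of "Id C Y"] Y by auto
  moreover obtain e2 where "e2 \<in> hom C X Z" "\<pi>1 \<cdot> e2 = zero_map X Y" "\<pi>2 \<cdot> e2 = Id C X"
    using product_pairing[OF pr zero_map_in_hom[OF X Y], of "Id C X"] X by auto
  ultimately show ?thesis using that pr by blast
qed

lemma product_map_comp_first_injection:
  assumes pm: "is_product C N X M r1 r2" and pr: "is_product C Y X Z \<pi>1 \<pi>2" and i: "i \<in> hom C N Y"
    and m: "m \<in> hom C M Z" "\<pi>1 \<cdot> m = i \<cdot> r1" "\<pi>2 \<cdot> m = r2"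
    and j1: "j1 \<in> hom C N M" "r1 \<cdot> j1 = Id C N" "r2 \<cdot> j1 = zero_map N X"
    and e1: "e1 \<in> hom C Y Z" "\<pi>1 \<cdot> e1 = Id C Y" "\<pi>2 \<cdot> e1 = zero_map Y X"
  shows "m \<cdot> j1 = e1 \<cdot> i"
proof (rule product_arrow_eqI[OF pr])
  have X: "X \<in> Obj C" and Y: "Y \<in> Obj C" and r: "r1 \<in> hom C M N"
    and \<pi>: "\<pi>1 \<in> hom C Z Y" "\<pi>2 \<in> hom C Z X"
    using pm pr unfolding is_product_def by auto
  show "m \<cdot> j1 \<in> hom C N Z" "e1 \<cdot> i \<in> hom C N Z" using m j1 e1 i by auto
  show "\<pi>1 \<cdot> (m \<cdot> j1) = \<pi>1 \<cdot> (e1 \<cdot> i)"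
    using comp_assoc[OF j1(1) m(1) \<pi>(1)] comp_assoc[OF j1(1) r(1) i(1)] comp_assoc[OF i(1) e1(1) \<pi>(1)] m j1 e1 i
    by simp
  have "zero_arr C (zero_map Y X \<cdot> i)"
    using zero_arr_comp_right[OF zero_map_is_zero[OF Y X], of i] zero_map_in_hom[OF Y X] i by simp
  moreover have "zero_map Y X \<cdot> i \<in> hom C N X" using zero_map_in_hom[OF Y X] i by simp
  ultimately have "zero_map Y X \<cdot> i = zero_map N X" by (rule zero_arr_eq_zero_map)
  then have "\<pi>2 \<cdot> (e1 \<cdot> i) = zero_map N X" using comp_assoc[OF i(1) e1(1) \<pi>(2)] e1 by simp
  then show "\<pi>2 \<cdot> (m \<cdot> j1) = \<pi>2 \<cdot> (e1 \<cdot> i)" using comp_assoc[OF j1(1) m(1) \<pi>(2)] m j1 by simp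
qed

lemma product_map_comp_second_injection:
  assumes pm: "is_product C N X M r1 r2" and pr: "is_product C Y X Z \<pi>1 \<pi>2" and i: "i \<in> hom C N Y"
    and m: "m \<in> hom C M Z" "\<pi>1 \<cdot> m = i \<cdot> r1" "\<pi>2 \<cdot> m = r2"
    and j3: "j3 \<in> hom C X M" "r1 \<cdot> j3 = zero_map X N" "r2 \<cdot> j3 = Id C X"
    and e2: "e2 \<in> hom C X Z" "\<pi>1 \<cdot> e2 = zero_map X Y" "\<pi>2 \<cdot> e2 = Id C X"
  shows "m \<cdot> j3 = e2"
proof (rule product_arrow_eqI[OF pr])
  have N: "N \<in> Obj C" and X: "X \<in> Obj C" and r: "r1 \<in> hom C M N"
    and \<pi>: "\<pi>1 \<in> hom C Z Y" "\<pi>2 \<in> hom C Z X"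
    using pm pr unfolding is_product_def by auto
  show "m \<cdot> j3 \<in> hom C X Z" "e2 \<in> hom C X Z" using m j3 e2 by auto
  have "zero_arr C (i \<cdot> zero_map X N)"
    using zero_arr_comp_left[OF zero_map_is_zero[OF X N], of i] zero_map_in_hom[OF X N] i by simp
  moreover have "i \<cdot> zero_map X N \<in> hom C X Y" using zero_map_in_hom[OF X N] i by simp
  ultimately have "i \<cdot> zero_map X N = zero_map X Y" by (rule zero_arr_eq_zero_map)
  then show "\<pi>1 \<cdot> (m \<cdot> j3) = \<pi>1 \<cdot> e2"
    using comp_assoc[OF j3(1) m(1) \<pi>(1)] comp_assoc[OF j3(1) r(1) i(1)] m j3 e2 by simp
  show "\<pi>2 \<cdot> (m \<cdot> j3) = \<pi>2 \<cdot> e2" using comp_assoc[OF j3(1) m(1) \<pi>(2)] m j3 e2 by simp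
qed

lemma inclusion_comp_span_equiv:
  assumes f: "valid_span C X Y (N, p, i)" and pr: "is_product C Y X Z \<pi>1 \<pi>2"
    and e1: "e1 \<in> hom C Y Z" "\<pi>1 \<cdot> e1 = Id C Y" "\<pi>2 \<cdot> e1 = zero_map Y X"
    and e2: "e2 \<in> hom C X Z" "\<pi>1 \<cdot> e2 = zero_map X Y" "\<pi>2 \<cdot> e2 = Id C X"
  shows "span_equiv C X Z (N, p, e1 \<cdot> i) (X, Id C X, e2)"
proof -
  have N: "N \<in> Obj C" and p: "p \<in> hom C N X" "epi C p" and i: "i \<in> hom C N Y" "mono C i"
    using f by (auto simp: valid_span_iff)
  have X: "X \<in> Obj C" using p by auto
  have \<pi>: "\<pi>1 \<in> hom C Z Y" "\<pi>2 \<in> hom C Z X" using pr unfolding is_product_def by auto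
  obtain M r1 r2 where pm: "is_product C N X M r1 r2" using product_exists[OF N X] by blast
  have M: "M \<in> Obj C" and r: "r1 \<in> hom C M N" "r2 \<in> hom C M X"
    using pm unfolding is_product_def by auto
  obtain m where m: "m \<in> hom C M Z" "\<pi>1 \<cdot> m = i \<cdot> r1" "\<pi>2 \<cdot> m = r2"
    using product_pairing[OF pr _ r(2), of "i \<cdot> r1"] r i by auto
  obtain j1 where j1: "j1 \<in> hom C N M" "r1 \<cdot> j1 = Id C N" "r2 \<cdot> j1 = zero_map N X"
    using product_pairing[OF pm _ zero_map_in_hom[OF N X], of "Id C N"] N by auto
  obtain j2 where j2: "j2 \<in> hom C N M" "r1 \<cdot> j2 = Id C N" "r2 \<cdot> j2 = p"
    using product_pairing[OF pm _ p(1), of "Id C N"] N by auto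
  obtain j3 where j3: "j3 \<in> hom C X M" "r1 \<cdot> j3 = zero_map X N" "r2 \<cdot> j3 = Id C X"
    using product_pairing[OF pm zero_map_in_hom[OF X N], of "Id C X"] X by auto
  have m_mono: "mono C m"
    using mono_product_map[OF pm pr i(2) i(1) Id_mono[OF X] _ m(1,2)] m(3) r X by simp
  have A1: "valid_span C X Z (M, p \<cdot> r1, m)"
    using epi_comp[OF retraction_is_epi[OF j1(1) r(1) j1(2)] p(2)] M m m_mono r p
    by (simp add: valid_span_iff)
  have A2: "valid_span C X Z (M, r2, m)"
    using retraction_is_epi[OF j3(1) r(2) j3(3)] M m m_mono r by (simp add: valid_span_iff)
  have s0: "valid_span C X Z (N, p, e1 \<cdot> i)"
    using mono_comp[OF i(2) section_is_mono[OF e1(1) \<pi>(1) e1(2)]] N p e1 i by (simp add: valid_span_iff)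
  have s2: "valid_span C X Z (N, p, m \<cdot> j2)"
    using mono_comp[OF section_is_mono[OF j2(1) r(1) j2(2)] m_mono] N p m j2 by (simp add: valid_span_iff)
  have B: "valid_span C X Z (X, Id C X, e2)"
    using valid_span_of_mono[OF e2(1) section_is_mono[OF e2(1) \<pi>(2) e2(3)]] .
  have p_r1_j: "(p \<cdot> r1) \<cdot> j = p" if "j \<in> hom C N M" "r1 \<cdot> j = Id C N" for j
    using comp_assoc[OF that(1) r(1) p(1)] that p by simp
  have "m \<cdot> j1 = e1 \<cdot> i" by (rule product_map_comp_first_injection[OF pm pr i(1) m j1 e1])
  then have "span_equiv C X Z (N, p, e1 \<cdot> i) (M, p \<cdot> r1, m)"
    using span_equivI[OF s0 A1 j1(1) section_is_mono[OF j1(1) r(1) j1(2)]] p_r1_j j1 by simp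
  moreover have "span_equiv C X Z (N, p, m \<cdot> j2) (M, p \<cdot> r1, m)"
    using span_equivI[OF s2 A1 j2(1) section_is_mono[OF j2(1) r(1) j2(2)]] p_r1_j j2 by simp
  moreover have "span_equiv C X Z (N, p, m \<cdot> j2) (M, r2, m)"
    using span_equivI[OF s2 A2 j2(1) section_is_mono[OF j2(1) r(1) j2(2)]] j2 by simp
  moreover have "span_equiv C X Z (X, Id C X, e2) (M, r2, m)"
    using span_equivI[OF B A2 j3(1) section_is_mono[OF j3(1) r(2) j3(3)]] j3
      product_map_comp_second_injection[OF pm pr i(1) m j3 e2] by simp
  ultimately show ?thesis using span_equiv_sym span_equiv_trans by meson
qed


lemma Qhom_absorbing_inclusion:
  assumes X: "X \<in> Obj C" and Y: "Y \<in> Obj C"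
  shows "\<exists>Z \<in> Obj C. \<exists>H \<in> Qhom C Y Z. \<exists>E \<in> Qhom C X Z. \<forall>F \<in> Qhom C X Y. Qcomp C X Y Z H F = E"
proof -
  obtain Z \<pi>1 \<pi>2 e1 e2 where pr: "is_product C Y X Z \<pi>1 \<pi>2"
    and e1: "e1 \<in> hom C Y Z" "\<pi>1 \<cdot> e1 = Id C Y" "\<pi>2 \<cdot> e1 = zero_map Y X"
    and e2: "e2 \<in> hom C X Z" "\<pi>1 \<cdot> e2 = zero_map X Y" "\<pi>2 \<cdot> e2 = Id C X"
    using product_injections[OF X Y] by blast
  have \<pi>: "\<pi>1 \<in> hom C Z Y" "\<pi>2 \<in> hom C Z X" using pr unfolding is_product_def by auto
  have H: "valid_span C Y Z (Y, Id C Y, e1)"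
    using valid_span_of_mono[OF e1(1) section_is_mono[OF e1(1) \<pi>(1) e1(2)]] .
  have E: "valid_span C X Z (X, Id C X, e2)"
    using valid_span_of_mono[OF e2(1) section_is_mono[OF e2(1) \<pi>(2) e2(3)]] .
  have "Qcomp C X Y Z (span_class C Y Z (Y, Id C Y, e1)) F = span_class C X Z (X, Id C X, e2)"
    if F_hom: "F \<in> Qhom C X Y" for F
  proof -
    obtain s where "valid_span C X Y s" "F = span_class C X Y s" using F_hom unfolding Qhom_def by blast
    moreover obtain N p i where "s = (N, p, i)" by (cases s)
    ultimately have f: "valid_span C X Y (N, p, i)" and F: "F = span_class C X Y (N, p, i)" by simp_all
    have p: "p \<in> hom C N X" and i: "i \<in> hom C N Y" using f by (simp_all add: valid_span_iff)
    then have "(N, p \<cdot> Id C N, e1 \<cdot> i) \<in> span_comps C (N, p, i) (Y, Id C Y, e1)"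
      using pullback_along_Id[OF i] unfolding span_comps_iff by blast
    then have "(N, p, e1 \<cdot> i) \<in> span_comps C (N, p, i) (Y, Id C Y, e1)" using p by simp
    then show ?thesis
      using Qcomp_span_class[OF f H _ inclusion_comp_span_equiv[OF f pr e1 e2]] F by simp
  qed
  moreover have "Z \<in> Obj C" using e1 by auto
  moreover have "span_class C Y Z (Y, Id C Y, e1) \<in> Qhom C Y Z" "span_class C X Z (X, Id C X, e2) \<in> Qhom C X Z"
    using H E unfolding Qhom_def by blast+
  ultimately show ?thesis by blast
qed

end

theorem mainTheorem4:
  fixes C :: "('o,'m) cat"
  assumes "abelian C"
  shows "Q_filtered C"
proof -
  interpret abelian_context C using assms by (rule abelian_context.intro)
  have "Obj C \<noteq> {}" using zero_obj_exists unfolding zero_obj_def by blast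
  moreover have "\<exists>Z \<in> Obj C. Qhom C X Z \<noteq> {} \<and> Qhom C Y Z \<noteq> {}"
    and "\<forall>F \<in> Qhom C X Y. \<forall>G \<in> Qhom C X Y. \<exists>Z \<in> Obj C. \<exists>H \<in> Qhom C Y Z. Qcomp C X Y Z H F = Qcomp C X Y Z H G"
    if XY: "X \<in> Obj C" "Y \<in> Obj C" for X Y
  proof -
    obtain Z H E where Z: "Z \<in> Obj C" and H: "H \<in> Qhom C Y Z" and E: "E \<in> Qhom C X Z"
      and absorb: "\<forall>F \<in> Qhom C X Y. Qcomp C X Y Z H F = E"
      using Qhom_absorbing_inclusion[OF XY] by blast
    show "\<exists>Z \<in> Obj C. Qhom C X Z \<noteq> {} \<and> Qhom C Y Z \<noteq> {}" using Z H E by blast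
    show "\<forall>F \<in> Qhom C X Y. \<forall>G \<in> Qhom C X Y. \<exists>Z \<in> Obj C. \<exists>H \<in> Qhom C Y Z. Qcomp C X Y Z H F = Qcomp C X Y Z H G"
    proof (intro ballI)
      fix F G assume "F \<in> Qhom C X Y" "G \<in> Qhom C X Y"
      then have "Qcomp C X Y Z H F = Qcomp C X Y Z H G" using absorb by simp
      then show "\<exists>Z \<in> Obj C. \<exists>H \<in> Qhom C Y Z. Qcomp C X Y Z H F = Qcomp C X Y Z H G" using Z H by blast
    qed
  qed
  ultimately show ?thesis unfolding Q_filtered_def by blast
qed

end
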